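(* Let $\rho>0$, let $A\colon[0,\infty)\to\mathbb R^{n\times n}$ and $f\colon[0,\infty)\times\mathbb R^n\to\mathbb R^n$ be continuous, and suppose that $x'=A(t)x$ has an exponential dichotomy on $[0,\infty)$ with constants $N,\lambda>0$. Suppose there exist $\delta,L>0$ such that $|f(t,x_1)-f(t,x_2)|\le L|x_1-x_2|$ for all $t\ge0$ and $x_1,x_2\in B_{\rho+\delta}(0)$. If $L<\lambda/(2N)$, then $x'=A(t)x+f(t,x)$ has the conditional Lipschitz shadowing property in $B_\rho(0)$. Moreover, if $x'=A(t)x$ has an exponential contraction or exponential expansion on $[0,\infty)$ with constants $N,\lambda$, then the same conclusion holds under the weaker condition $L<\lambda/N$.
   Context: $|\cdot|$ is a fixed norm on $\mathbb R^n$ and the induced matrix norm; $B_r(x)=\{y:|y-x|\le r\}$. For continuous $g\colon[0,\infty)\times\mathbb R^n\to\mathbb R^n$ and $\tau\in(0,\infty]$, a pseudosolution of $x'=g(t,x)$ on $[0,\tau)$ is a $C^1$ map $y\colon[0,\tau)\to\mathbb R^n$ with $\sigma_y:=\sup_{0\le t<\tau}|y'(t)-g(t,y(t))|<\infty$. The equation has the conditional Lipschitz shadowing property in $H\neq\emptyset$ if there exist $\varepsilon_0,\kappa>0$ such that whenever $0<\varepsilon\le\varepsilon_0$ and $y$ is a pseudosolution on $[0,\tau)$ ($\tau\in(0,\infty]$) with $\sigma_y\le\varepsilon$ and $y(t)\in H$ for all $t\in[0,\tau)$, there is a solution $x$ on $[0,\tau)$ with $\sup_{0\le t<\tau}|x(t)-y(t)|\le\kappa\varepsilon$.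 With $T(t,s)$ the transition matrix of $x'=A(t)x$: an exponential dichotomy on $[0,\infty)$ consists of projections $P(t)$ and constants $N,\lambda>0$ with $P(t)T(t,s)=T(t,s)P(s)$, $|T(t,s)P(s)|\le Ne^{-\lambda(t-s)}$ for $t\ge s\ge0$, and $|T(t,s)(I-P(s))|\le Ne^{-\lambda(s-t)}$ for $0\le t\le s$. It is an exponential contraction if moreover $P(t)=I$ for all $t$, and an exponential expansion if $P(t)=0$ for all $t$. *)

theory Defs
  imports "HOL-Analysis.Analysis"
begin

definition is_norm :: "(real^'n \<Rightarrow> real) \<Rightarrow> bool" where
  "is_norm nrm \<longleftrightarrow>
     (\<forall>x. 0 \<le> nrm x) \<and> (\<forall>x. nrm x = 0 \<longleftrightarrow> x = 0) \<and>
     (\<forall>c x. nrm (c *\<^sub>R x) = \<bar>c\<bar> * nrm x) \<and>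
     (\<forall>x y. nrm (x + y) \<le> nrm x + nrm y)"

definition mat_norm :: "(real^'n \<Rightarrow> real) \<Rightarrow> real^'n^'n \<Rightarrow> real" where
  "mat_norm nrm M = (SUP x\<in>{x. nrm x \<le> 1}. nrm (M *v x))"

definition nball :: "(real^'n \<Rightarrow> real) \<Rightarrow> real^'n \<Rightarrow> real \<Rightarrow> (real^'n) set" where
  "nball nrm x r = {y. nrm (y - x) \<le> r}"

definition ivl :: "ereal \<Rightarrow> real set" where
  "ivl \<tau> = {t. 0 \<le> t \<and> ereal t < \<tau>}"

definition is_pseudosolution ::
  "(real^'n \<Rightarrow> real) \<Rightarrow> (real \<Rightarrow> real^'n \<Rightarrow> real^'n) \<Rightarrow> ereal \<Rightarrow> (real \<Rightarrow> real^'n) \<Rightarrow> bool" where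
  "is_pseudosolution nrm g \<tau> y \<longleftrightarrow>
     (\<forall>t\<in>ivl \<tau>. y differentiable (at t within ivl \<tau>)) \<and>
     continuous_on (ivl \<tau>) (\<lambda>t. vector_derivative y (at t within ivl \<tau>)) \<and>
     bdd_above ((\<lambda>t. nrm (vector_derivative y (at t within ivl \<tau>) - g t (y t))) ` ivl \<tau>)"

definition pseudo_err ::
  "(real^'n \<Rightarrow> real) \<Rightarrow> (real \<Rightarrow> real^'n \<Rightarrow> real^'n) \<Rightarrow> ereal \<Rightarrow> (real \<Rightarrow> real^'n) \<Rightarrow> real" where
  "pseudo_err nrm g \<tau> y =
     (SUP t\<in>ivl \<tau>. nrm (vector_derivative y (at t within ivl \<tau>) - g t (y t)))"

definition is_solution ::
  "(real \<Rightarrow> real^'n \<Rightarrow> real^'n) \<Rightarrow> ereal \<Rightarrow> (real \<Rightarrow> real^'n) \<Rightarrow> bool" where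
  "is_solution g \<tau> x \<longleftrightarrow>
     (\<forall>t\<in>ivl \<tau>. (x has_vector_derivative g t (x t)) (at t within ivl \<tau>))"

definition cond_lipschitz_shadowing ::
  "(real^'n \<Rightarrow> real) \<Rightarrow> (real \<Rightarrow> real^'n \<Rightarrow> real^'n) \<Rightarrow> (real^'n) set \<Rightarrow> bool" where
  "cond_lipschitz_shadowing nrm g H \<longleftrightarrow>
     (\<exists>\<epsilon>0 \<kappa>. \<epsilon>0 > 0 \<and> \<kappa> > 0 \<and>
        (\<forall>\<epsilon> \<tau> y. 0 < \<epsilon> \<longrightarrow> \<epsilon> \<le> \<epsilon>0 \<longrightarrow> \<tau> > 0 \<longrightarrow>
           is_pseudosolution nrm g \<tau> y \<longrightarrow> pseudo_err nrm g \<tau> y \<le> \<epsilon> \<longrightarrow>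
           (\<forall>t\<in>ivl \<tau>. y t \<in> H) \<longrightarrow>
           (\<exists>x. is_solution g \<tau> x \<and>
                (\<forall>t\<in>ivl \<tau>. nrm (x t - y t) \<le> \<kappa> * \<epsilon>))))"

definition is_transition_matrix ::
  "(real \<Rightarrow> real^'n^'n) \<Rightarrow> (real \<Rightarrow> real \<Rightarrow> real^'n^'n) \<Rightarrow> bool" where
  "is_transition_matrix A T \<longleftrightarrow>
     (\<forall>s\<ge>0. T s s = mat 1 \<and>
        (\<forall>t\<ge>0. ((\<lambda>r. T r s) has_vector_derivative (A t ** T t s)) (at t within {0..})))"

definition exp_dichotomy_with ::
  "(real^'n \<Rightarrow> real) \<Rightarrow> (real \<Rightarrow> real^'n^'n) \<Rightarrow> (real \<Rightarrow> real^'n^'n) \<Rightarrow> real \<Rightarrow> real \<Rightarrow> bool" where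
  "exp_dichotomy_with nrm A P N lam \<longleftrightarrow> N > 0 \<and> lam > 0 \<and>
     (\<exists>T. is_transition_matrix A T \<and>
        (\<forall>t\<ge>0. P t ** P t = P t) \<and>
        (\<forall>t\<ge>0. \<forall>s\<ge>0. P t ** T t s = T t s ** P s) \<and>
        (\<forall>t s. 0 \<le> s \<longrightarrow> s \<le> t \<longrightarrow>
            mat_norm nrm (T t s ** P s) \<le> N * exp (- lam * (t - s))) \<and>
        (\<forall>t s. 0 \<le> t \<longrightarrow> t \<le> s \<longrightarrow>
            mat_norm nrm (T t s ** (mat 1 - P s)) \<le> N * exp (- lam * (s - t))))"

definition has_exp_dichotomy where
  "has_exp_dichotomy nrm A N lam \<longleftrightarrow> (\<exists>P. exp_dichotomy_with nrm A P N lam)"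

definition has_exp_contraction where
  "has_exp_contraction nrm A N lam \<longleftrightarrow> exp_dichotomy_with nrm A (\<lambda>_. mat 1) N lam"

definition has_exp_expansion where
  "has_exp_expansion nrm A N lam \<longleftrightarrow> exp_dichotomy_with nrm A (\<lambda>_. 0) N lam"

end

theory Submission
  imports Defs
begin

text \<open>
  Write the shadowing solution as \<open>x = y + z\<close>. If \<open>e = y' - A y - f(t, y)\<close> is the defect of the
  pseudosolution, then \<open>z\<close> has to solve \<open>z' = A z + h\<^sub>z\<close> with
  \<open>h\<^sub>z(t) = f(t, y + z) - f(t, y) - e(t)\<close>. The dichotomy provides a Green operator \<open>\<Gamma>\<close> that turns a
  bounded continuous \<open>h\<close> into a solution of \<open>u' = A u + h\<close> with \<open>|\<Gamma> h| \<le> 2N/\<lambda> \<cdot> sup |h|\<close>; for a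
  contraction or an expansion only one of its two integrals is present and the constant is \<open>N/\<lambda>\<close>.
  As long as \<open>y + z\<close> stays in the ball of radius \<open>\<rho> + \<delta>\<close>, the map \<open>z \<mapsto> \<Gamma> h\<^sub>z\<close> therefore sends the ball of
  radius \<open>\<kappa>\<epsilon>\<close> of bounded continuous functions into itself and contracts with constant \<open>q = 2NL/\<lambda> < 1\<close>
  (resp. \<open>NL/\<lambda>\<close>), where \<open>\<kappa> = (2N/\<lambda>)/(1 - q)\<close>. Its fixed point is the shadowing solution.
\<close>

section \<open>Norms on \<open>\<real>\<^sup>n\<close>\<close>

context
  fixes nrm :: "real^'n \<Rightarrow> real"
  assumes nrm: "is_norm nrm"
begin

lemma is_norm_nonneg: "0 \<le> nrm x"
  and is_norm_eq_0_iff: "nrm x = 0 \<longleftrightarrow> x = 0"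
  and is_norm_scaleR: "nrm (c *\<^sub>R x) = \<bar>c\<bar> * nrm x"
  and is_norm_triangle: "nrm (x + y) \<le> nrm x + nrm y"
  using nrm unfolding is_norm_def by auto

lemma is_norm_zero: "nrm 0 = 0"
  using is_norm_eq_0_iff by simp

lemma is_norm_minus_commute: "nrm (x - y) = nrm (y - x)"
  using is_norm_scaleR[of "-1" "x - y"] by simp

lemma is_norm_triangle_diff: "nrm (x - y) \<le> nrm x + nrm y"
  using is_norm_triangle[of x "-y"] is_norm_scaleR[of "-1" y] by simp

lemma is_norm_reverse_triangle: "\<bar>nrm x - nrm y\<bar> \<le> nrm (x - y)"
  using is_norm_triangle[of "x - y" y] is_norm_triangle[of "y - x" x] is_norm_minus_commute[of x y]
  by simp

lemma is_norm_sum_le: "finite S \<Longrightarrow> nrm (sum g S) \<le> (\<Sum>i\<in>S. nrm (g i))"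
  by (induction S rule: finite_induct) (simp_all add: is_norm_zero order_trans[OF is_norm_triangle])

lemma is_norm_le_norm: "\<exists>C>0. \<forall>x. nrm x \<le> C * norm x"
proof -
  define C where "C = 1 + (\<Sum>b\<in>Basis. nrm (b::real^'n))"
  have "nrm x \<le> C * norm x" for x :: "real^'n"
  proof -
    have "nrm x = nrm (\<Sum>b\<in>Basis. (x \<bullet> b) *\<^sub>R b)" by (simp add: euclidean_representation)
    also have "\<dots> \<le> (\<Sum>b\<in>Basis. nrm ((x \<bullet> b) *\<^sub>R b))" by (rule is_norm_sum_le) simp
    also have "\<dots> = (\<Sum>b\<in>Basis. \<bar>x \<bullet> b\<bar> * nrm b)" by (simp add: is_norm_scaleR)
    also have "\<dots> \<le> (\<Sum>b\<in>Basis. norm x * nrm b)"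
      by (intro sum_mono mult_right_mono Basis_le_norm is_norm_nonneg)
    also have "\<dots> \<le> C * norm x" unfolding C_def by (simp add: sum_distrib_left algebra_simps)
    finally show ?thesis .
  qed
  moreover have "C > 0" unfolding C_def by (simp add: add_pos_nonneg sum_nonneg is_norm_nonneg)
  ultimately show ?thesis by blast
qed

lemma is_norm_continuous: "continuous_on UNIV nrm"
proof -
  obtain C where C: "C > 0" "\<And>x. nrm x \<le> C * norm x" using is_norm_le_norm by blast
  have "C-lipschitz_on UNIV nrm"
  proof (rule lipschitz_onI)
    fix x y :: "real^'n"
    have "dist (nrm x) (nrm y) \<le> nrm (x - y)" using is_norm_reverse_triangle by (simp add: dist_real_def)
    also have "\<dots> \<le> C * dist x y" using C(2)[of "x - y"] by (simp add: dist_norm)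
    finally show "dist (nrm x) (nrm y) \<le> C * dist x y" .
  qed (use C in auto)
  then show ?thesis by (rule lipschitz_on_continuous_on)
qed

lemma isCont_is_norm: "isCont nrm x"
  using is_norm_continuous continuous_on_eq_continuous_at[of UNIV nrm] by simp

text \<open>\<open>nrm\<close> attains a positive minimum on the Euclidean sphere.\<close>
lemma is_norm_ge_norm: "\<exists>c>0. \<forall>x. c * norm x \<le> nrm x"
proof -
  have "sphere (0::real^'n) 1 \<noteq> {}" by (simp add: sphere_eq_empty)
  then obtain x0 where x0: "x0 \<in> sphere (0::real^'n) 1" "\<And>y. y \<in> sphere 0 1 \<Longrightarrow> nrm x0 \<le> nrm y"
    using continuous_attains_inf[OF compact_sphere _ continuous_on_subset[OF is_norm_continuous]] by blast
  have "nrm x0 * norm x \<le> nrm x" for x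
  proof (cases "x = 0")
    case False
    then have "nrm x0 \<le> nrm ((1 / norm x) *\<^sub>R x)" by (intro x0(2)) simp
    also have "\<dots> = nrm x / norm x" by (simp add: is_norm_scaleR)
    finally show ?thesis using False by (simp add: field_simps)
  qed (simp add: is_norm_zero)
  moreover have "nrm x0 > 0" using x0(1) is_norm_nonneg[of x0] is_norm_eq_0_iff[of x0] by auto
  ultimately show ?thesis by blast
qed

lemma mat_norm_le: "mat_norm nrm M \<le> B \<Longrightarrow> nrm (M *v x) \<le> B * nrm x"
proof -
  assume MB: "mat_norm nrm M \<le> B"
  obtain C where C: "C > 0" "\<And>x. nrm x \<le> C * norm x" using is_norm_le_norm by blast
  obtain c where c: "c > 0" "\<And>x. c * norm x \<le> nrm x" using is_norm_ge_norm by blast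
  obtain K where K: "\<And>x. norm (M *v x) \<le> norm x * K" "K > 0"
    using bounded_linear.pos_bounded[OF matrix_vector_mul_bounded_linear[of M]] by blast
  have bdd: "bdd_above ((\<lambda>x. nrm (M *v x)) ` {x. nrm x \<le> 1})"
  proof (rule bdd_aboveI2)
    fix x :: "real^'n" assume "x \<in> {x. nrm x \<le> 1}"
    then have "norm x \<le> 1 / c" using c(1) c(2)[of x] by (simp add: field_simps)
    then have "norm (M *v x) \<le> 1 / c * K" using K by (meson dual_order.trans less_imp_le mult_right_mono)
    then show "nrm (M *v x) \<le> C * (1 / c * K)" using C by (meson order.trans mult_left_mono less_imp_le)
  qed
  have "nrm (M *v x) \<le> mat_norm nrm M * nrm x"
  proof (cases "x = 0")
    case False
    then have nx: "nrm x > 0" using is_norm_nonneg[of x] is_norm_eq_0_iff[of x] by auto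
    have "nrm (M *v ((1 / nrm x) *\<^sub>R x)) \<le> mat_norm nrm M"
      unfolding mat_norm_def by (rule cSUP_upper[OF _ bdd]) (use nx in \<open>simp add: is_norm_scaleR\<close>)
    then have "nrm (M *v x) / nrm x \<le> mat_norm nrm M"
      using nx by (simp add: matrix_vector_mult_scaleR is_norm_scaleR)
    then show ?thesis using nx by (simp add: field_simps)
  qed (simp add: is_norm_zero)
  also have "\<dots> \<le> B * nrm x" by (rule mult_right_mono[OF MB is_norm_nonneg])
  finally show ?thesis .
qed

text \<open>
  The integral lies in the convex set \<open>{v. nrm v \<le> r}\<close> for every \<open>r > \<integral> g\<close>; otherwise a separating
  hyperplane gives a linear functional whose integral contradicts the pointwise bound.
\<close>
lemma is_norm_integral_le:
  fixes f :: "real \<Rightarrow> real^'n"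
  assumes f: "f integrable_on S" and g: "g integrable_on S" and fg: "\<And>x. x \<in> S \<Longrightarrow> nrm (f x) \<le> g x"
  shows "nrm (integral S f) \<le> integral S g"
proof (rule ccontr)
  define v where "v = integral S f"
  define r where "r = integral S g"
  assume "\<not> nrm (integral S f) \<le> integral S g"
  then have rv: "r < nrm v" unfolding r_def v_def by simp
  have r0: "0 \<le> r" unfolding r_def by (rule integral_nonneg[OF g]) (meson fg is_norm_nonneg order.trans)
  define r' where "r' = (r + nrm v) / 2"
  have r': "r < r'" "r' < nrm v" "0 < r'" using rv r0 unfolding r'_def by auto
  define K where "K = {x::real^'n. nrm x \<le> r'}"
  have "convex K" unfolding K_def convex_def
  proof (intro allI impI ballI, clarify)
    fix x y :: "real^'n" and u w :: real
    assume h: "nrm x \<le> r'" "nrm y \<le> r'" "0 \<le> u" "0 \<le> w" "u + w = 1"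
    have "nrm (u *\<^sub>R x + w *\<^sub>R y) \<le> u * nrm x + w * nrm y"
      using is_norm_triangle is_norm_scaleR h(3,4) by (metis abs_of_nonneg)
    also have "\<dots> \<le> u * r' + w * r'" using h by (intro add_mono mult_left_mono) auto
    finally show "nrm (u *\<^sub>R x + w *\<^sub>R y) \<le> r'" using h(5) by (metis distrib_right mult_1)
  qed
  moreover have "closed K" unfolding K_def
    by (rule closed_Collect_le) (auto intro: continuous_on_subset[OF is_norm_continuous])
  moreover have "0 \<in> K" unfolding K_def using r' by (simp add: is_norm_zero)
  moreover have "v \<notin> K" unfolding K_def using r' by simp
  ultimately obtain a b where ab: "inner a v < b" "\<forall>x\<in>K. inner a x \<ge> b"
    using supporting_hyperplane_closed_point by blast
  define B where "B = - b"
  have B0: "0 \<le> B" using ab(2) \<open>0 \<in> K\<close> unfolding B_def by force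
  have phi: "- inner a x \<le> B / r' * nrm x" for x
  proof (cases "x = 0")
    case False
    then have nx: "nrm x > 0" using is_norm_nonneg[of x] is_norm_eq_0_iff[of x] by auto
    have "(r' / nrm x) *\<^sub>R x \<in> K" unfolding K_def using nx r' by (simp add: is_norm_scaleR)
    then have "(r' / nrm x) * inner a x \<ge> b" using ab(2) by fastforce
    then show ?thesis unfolding B_def using nx r' by (simp add: field_simps)
  qed (simp add: is_norm_zero)
  have bl: "bounded_linear (\<lambda>x::real^'n. - inner a x)" by (intro bounded_linear_minus bounded_linear_inner_right)
  have "- inner a v = integral S ((\<lambda>x. - inner a x) \<circ> f)" unfolding v_def
    by (rule integral_linear[OF f bl, symmetric])
  also have "\<dots> \<le> integral S (\<lambda>x. B / r' * g x)"
  proof (rule integral_le[OF integrable_linear[OF f bl]])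
    show "(\<lambda>x. B / r' * g x) integrable_on S" using integrable_cmul[OF g, of "B / r'"] by simp
    fix x assume "x \<in> S"
    have "B / r' * nrm (f x) \<le> B / r' * g x" using fg[OF \<open>x \<in> S\<close>] B0 r' by (intro mult_left_mono) auto
    then show "((\<lambda>x. - inner a x) \<circ> f) x \<le> B / r' * g x" using phi[of "f x"] by simp
  qed
  also have "\<dots> = B / r' * r" unfolding r_def by simp
  also have "\<dots> \<le> B" using B0 r' r0 by (simp add: field_simps mult_left_mono)
  finally show False using ab(1) unfolding B_def by simp
qed

end

section \<open>Linear equations and transition matrices\<close>

lemma bounded_bilinear_matrix_matrix_mult:
  "bounded_bilinear ((**) :: real^'n^'n \<Rightarrow> real^'n^'n \<Rightarrow> real^'n^'n)"
  unfolding bilinear_conv_bounded_bilinear[symmetric] bilinear_def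
  by (auto intro!: linearI simp: vec_eq_iff matrix_matrix_mult_def sum.distrib sum_distrib_left algebra_simps)

lemma bounded_bilinear_matrix_vector_mult:
  "bounded_bilinear ((*v) :: real^'n^'n \<Rightarrow> real^'n \<Rightarrow> real^'n)"
  unfolding bilinear_conv_bounded_bilinear[symmetric] bilinear_def
  by (auto intro!: linearI simp: vec_eq_iff matrix_vector_mult_def sum.distrib sum_distrib_left algebra_simps)

lemma has_real_derivative_nonpos_imp_decreasing:
  fixes g :: "real \<Rightarrow> real"
  assumes "a \<le> b" and "\<And>x. x \<in> {a..b} \<Longrightarrow> (g has_real_derivative g' x) (at x within {a..b})"
    and "\<And>x. x \<in> {a..b} \<Longrightarrow> g' x \<le> 0"
  shows "g b \<le> g a"
proof -
  obtain x where x: "x \<in> {a..b}" "g b - g a = g' x * (b - a)"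
    using mvt_very_simple[OF assms(1), of g "\<lambda>x. (*) (g' x)"] assms(2)
    by (auto simp: has_field_derivative_def)
  have "g' x * (b - a) \<le> 0" using assms(1,3) x(1) by (auto intro: mult_nonpos_nonneg)
  then show ?thesis using x by simp
qed

text \<open>Gronwall in both time directions: compare \<open>u\<close> with \<open>exp(\<plusminus>k x)\<close>.\<close>
lemma derivative_bounded_zero_iff:
  fixes u :: "real \<Rightarrow> real"
  assumes "a \<le> b" and u: "\<And>x. x \<in> {a..b} \<Longrightarrow> (u has_real_derivative u' x) (at x within {a..b})"
    and bnd: "\<And>x. x \<in> {a..b} \<Longrightarrow> \<bar>u' x\<bar> \<le> k * u x" and nonneg: "\<And>x. x \<in> {a..b} \<Longrightarrow> 0 \<le> u x"
  shows "u a = 0 \<longleftrightarrow> u b = 0"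
proof
  assume "u a = 0"
  have "exp (- k * b) * u b \<le> exp (- k * a) * u a"
  proof (rule has_real_derivative_nonpos_imp_decreasing[OF \<open>a \<le> b\<close>])
    fix x assume x: "x \<in> {a..b}"
    show "((\<lambda>x. exp (- k * x) * u x) has_real_derivative exp (- k * x) * (u' x - k * u x))
        (at x within {a..b})"
      by (rule derivative_eq_intros u[OF x] refl | simp add: algebra_simps)+
    show "exp (- k * x) * (u' x - k * u x) \<le> 0"
      using bnd[OF x] by (intro mult_nonneg_nonpos) auto
  qed
  then show "u b = 0" using \<open>u a = 0\<close> nonneg[of b] \<open>a \<le> b\<close> by (simp add: mult_le_0_iff)
next
  assume "u b = 0"
  have "- exp (k * b) * u b \<le> - exp (k * a) * u a"
  proof (rule has_real_derivative_nonpos_imp_decreasing[OF \<open>a \<le> b\<close>])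
    fix x assume x: "x \<in> {a..b}"
    show "((\<lambda>x. - exp (k * x) * u x) has_real_derivative - exp (k * x) * (u' x + k * u x))
        (at x within {a..b})"
      by (rule derivative_eq_intros u[OF x] refl | simp add: algebra_simps)+
    show "- exp (k * x) * (u' x + k * u x) \<le> 0"
      using bnd[OF x] by (simp add: abs_le_iff)
  qed
  then show "u a = 0" using \<open>u b = 0\<close> nonneg[of a] \<open>a \<le> b\<close> by (simp add: mult_le_0_iff)
qed

lemma linear_matrix_ode_zero:
  fixes X A :: "real \<Rightarrow> real^'n^'n"
  assumes A: "continuous_on {0..} A"
    and X: "\<And>t. t \<ge> 0 \<Longrightarrow> (X has_vector_derivative A t ** X t) (at t within {0..})"
    and "s \<ge> 0" "X s = 0" "t \<ge> 0"
  shows "X t = 0"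
proof -
  define a where "a = min s t"
  define b where "b = max s t"
  have ab: "a \<le> b" "{a..b} \<subseteq> {0..}" using assms unfolding a_def b_def by auto
  have "compact (A ` {a..b})" by (rule compact_continuous_image[OF continuous_on_subset[OF A ab(2)]]) simp
  then obtain M where M: "\<And>r. r \<in> {a..b} \<Longrightarrow> norm (A r) \<le> M"
    using compact_imp_bounded bounded_pos by (metis imageI)
  obtain K where K: "\<And>(P :: real^'n^'n) (Q :: real^'n^'n). norm (P ** Q) \<le> norm P * norm Q * K" "K > 0"
    using bounded_bilinear.pos_bounded[OF bounded_bilinear_matrix_matrix_mult] by blast
  define u where "u r = X r \<bullet> X r" for r
  have "u a = 0 \<longleftrightarrow> u b = 0"
  proof (rule derivative_bounded_zero_iff[OF ab(1)])
    fix r assume r: "r \<in> {a..b}"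
    have "(X has_vector_derivative A r ** X r) (at r within {a..b})"
      using X[of r] r ab by (auto intro: has_vector_derivative_within_subset)
    from bounded_bilinear.has_vector_derivative[OF bounded_bilinear_inner this this]
    show "(u has_real_derivative 2 * (X r \<bullet> (A r ** X r))) (at r within {a..b})"
      unfolding u_def has_real_derivative_iff_has_vector_derivative by (simp add: inner_commute)
    have "\<bar>X r \<bullet> (A r ** X r)\<bar> \<le> norm (X r) * (norm (A r) * norm (X r) * K)"
      by (rule order_trans[OF Cauchy_Schwarz_ineq2 mult_left_mono[OF K(1)]]) simp
    also have "\<dots> \<le> norm (X r) * (M * norm (X r) * K)"
      using M[OF r] K(2) by (intro mult_left_mono mult_right_mono) auto
    also have "\<dots> = M * K * u r" by (simp add: u_def power2_norm_eq_inner[symmetric] power2_eq_square)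
    finally show "\<bar>2 * (X r \<bullet> (A r ** X r))\<bar> \<le> 2 * M * K * u r" by simp
  qed (simp add: u_def)
  moreover have "u s = 0" using \<open>X s = 0\<close> by (simp add: u_def)
  ultimately have "u t = 0" unfolding a_def b_def by (cases "s \<le> t") auto
  then show ?thesis by (simp add: u_def)
qed

context
  fixes A :: "real \<Rightarrow> real^'n^'n" and T :: "real \<Rightarrow> real \<Rightarrow> real^'n^'n"
  assumes A: "continuous_on {0..} A" and T: "is_transition_matrix A T"
begin

lemma transition_matrix_has_vector_derivative:
  "s \<ge> 0 \<Longrightarrow> t \<ge> 0 \<Longrightarrow> ((\<lambda>r. T r s) has_vector_derivative (A t ** T t s)) (at t within {0..})"
  using T unfolding is_transition_matrix_def by auto

lemma transition_matrix_diag: "s \<ge> 0 \<Longrightarrow> T s s = mat 1"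
  using T unfolding is_transition_matrix_def by auto

lemma transition_matrix_cocycle:
  assumes "r \<ge> 0" "s \<ge> 0" "t \<ge> 0"
  shows "T t s ** T s r = T t r"
proof -
  define X where "X t = T t s ** T s r - T t r" for t
  have "X t = 0"
  proof (rule linear_matrix_ode_zero[OF A _ \<open>s \<ge> 0\<close> _ \<open>t \<ge> 0\<close>])
    fix t :: real assume t: "t \<ge> 0"
    have "((\<lambda>t. T t s ** T s r) has_vector_derivative ((A t ** T t s) ** T s r)) (at t within {0..})"
      by (rule bounded_linear.has_vector_derivative[OF
            bounded_bilinear.bounded_linear_left[OF bounded_bilinear_matrix_matrix_mult]
            transition_matrix_has_vector_derivative[OF \<open>s \<ge> 0\<close> t]])
    then have "(X has_vector_derivative ((A t ** T t s) ** T s r - A t ** T t r)) (at t within {0..})"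
      unfolding X_def
      by (rule has_vector_derivative_diff[OF _ transition_matrix_has_vector_derivative[OF \<open>r \<ge> 0\<close> t]])
    moreover have "(A t ** T t s) ** T s r - A t ** T t r = A t ** X t"
      unfolding X_def
      by (simp add: matrix_mul_assoc bounded_bilinear.diff_right[OF bounded_bilinear_matrix_matrix_mult])
    ultimately show "(X has_vector_derivative A t ** X t) (at t within {0..})" by simp
  qed (simp add: X_def transition_matrix_diag \<open>s \<ge> 0\<close>)
  then show ?thesis unfolding X_def by simp
qed

lemma transition_matrix_inverse: "t \<ge> 0 \<Longrightarrow> s \<ge> 0 \<Longrightarrow> T t s ** T s t = mat 1"
  using transition_matrix_cocycle[of t s t] transition_matrix_diag[of t] by simp

text \<open>
  Continuity in the initial time: \<open>T t s' - T t s = T t s' (T s' s - I)\<close> by the cocycle law, and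
  \<open>T s' s \<rightarrow> I\<close> forces \<open>|T t s'| \<le> 2 |T t s|\<close> for \<open>s'\<close> near \<open>s\<close>.
\<close>
lemma transition_matrix_continuous_on_initial:
  assumes "t \<ge> 0"
  shows "continuous_on {0..} (\<lambda>s. T t s)"
  unfolding continuous_on_eq_continuous_within
proof (intro ballI)
  fix s :: real assume "s \<in> {0..}"
  then have s0: "s \<ge> 0" by simp
  obtain K where K: "\<And>(P :: real^'n^'n) (Q :: real^'n^'n). norm (P ** Q) \<le> norm P * norm Q * K" "K > 0"
    using bounded_bilinear.pos_bounded[OF bounded_bilinear_matrix_matrix_mult] by blast
  define E where "E s' = T s' s - mat 1" for s'
  have E0: "(E \<longlongrightarrow> 0) (at s within {0..})"
    using has_vector_derivative_continuous[OF transition_matrix_has_vector_derivative[OF s0 s0]]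
    unfolding E_def by (simp add: continuous_within LIM_zero_iff transition_matrix_diag[OF s0])
  have "eventually (\<lambda>s'. norm (E s') < 1 / (2 * K) \<and> s' \<in> {0..}) (at s within {0..})"
    using tendstoD[OF E0, of "1 / (2 * K)"] K(2) by (auto simp: dist_norm eventually_at_filter elim: eventually_mono)
  then have "eventually (\<lambda>s'. norm (T t s' - T t s) \<le> 2 * K * norm (T t s) * norm (E s')) (at s within {0..})"
  proof eventually_elim
    case (elim s')
    have diff: "T t s - T t s' = T t s' ** E s'"
      using transition_matrix_cocycle[of s s' t] s0 elim \<open>t \<ge> 0\<close>
      by (simp add: E_def bounded_bilinear.diff_right[OF bounded_bilinear_matrix_matrix_mult])
    have "norm (T t s') \<le> norm (T t s) + norm (T t s' ** E s')"
      using norm_triangle_ineq4[of "T t s" "T t s' ** E s'"] by (simp add: diff[symmetric])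
    also have "\<dots> \<le> norm (T t s) + norm (T t s') * (norm (E s') * K)"
      using K(1) by (simp add: mult.assoc)
    also have "\<dots> \<le> norm (T t s) + norm (T t s') * (1 / 2)"
      using elim K(2) by (intro add_left_mono mult_left_mono) (auto simp: field_simps)
    finally have "norm (T t s') \<le> 2 * norm (T t s)" by simp
    have "norm (T t s' - T t s) = norm (T t s' ** E s')" by (simp only: norm_minus_commute[of "T t s'"] diff)
    also have "\<dots> \<le> norm (T t s') * norm (E s') * K" by (rule K(1))
    also have "\<dots> \<le> 2 * norm (T t s) * norm (E s') * K"
      using \<open>norm (T t s') \<le> 2 * norm (T t s)\<close> K(2) by (intro mult_right_mono) auto
    finally show ?case by (simp add: algebra_simps)
  qed
  moreover have "((\<lambda>s'. 2 * K * norm (T t s) * norm (E s')) \<longlongrightarrow> 0) (at s within {0..})"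
    using tendsto_mult_right_zero[OF tendsto_norm_zero[OF E0]] by simp
  ultimately have "((\<lambda>s'. T t s' - T t s) \<longlongrightarrow> 0) (at s within {0..})"
    by (rule Lim_null_comparison)
  then show "continuous (at s within {0..}) (\<lambda>s. T t s)"
    by (simp add: continuous_within LIM_zero_iff)
qed

end

section \<open>Intervals and exponential integrals\<close>

lemma ivl_subset_atLeast: "ivl \<tau> \<subseteq> {0..}"
  unfolding ivl_def by auto

lemma ivl_lebesgue: "ivl \<tau> \<in> sets lebesgue"
proof (cases \<tau>)
  case (real r)
  then have "ivl \<tau> = {0..<r}" unfolding ivl_def by auto
  then show ?thesis by simp
next
  case PInf
  then have "ivl \<tau> = {0..}" unfolding ivl_def by auto
  then show ?thesis by simp
qed (simp add: ivl_def)

lemma atLeastAtMost_subset_ivl: "t \<in> ivl \<tau> \<Longrightarrow> {0..t} \<subseteq> ivl \<tau>"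
  unfolding ivl_def by (auto intro: le_less_trans[of "ereal _" "ereal t"])

lemma ivl_right_nbhd:
  assumes "t \<in> ivl \<tau>"
  obtains t' where "t < t'" "t' \<in> ivl \<tau>"
proof -
  obtain z where "ereal t < ereal z" "ereal z < \<tau>"
    using assms ereal_dense2 unfolding ivl_def by blast
  then show ?thesis using assms that unfolding ivl_def by auto
qed

lemma integrable_on_exp_minus_subset:
  fixes lam K c :: real
  assumes "lam > 0" "0 \<le> K" "S \<subseteq> {c..}" "S \<in> sets lebesgue"
  shows "(\<lambda>s. K * exp (- lam * s)) integrable_on S"
proof -
  have "(\<lambda>s. K * exp (- lam * s)) integrable_on {c..}"
    using integrable_on_exp_minus_to_infinity[OF assms(1)] has_integral_mult_right
    unfolding integrable_on_def by blast
  then have "(\<lambda>s. K * exp (- lam * s)) absolutely_integrable_on {c..}"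
    using assms(2) by (intro nonnegative_absolutely_integrable_1) auto
  then have "(\<lambda>s. K * exp (- lam * s)) absolutely_integrable_on S"
    by (rule set_integrable_subset) (use assms in auto)
  then show ?thesis by (rule set_lebesgue_integral_eq_integral(1))
qed

lemma integral_exp_minus_to_infinity:
  fixes lam K c :: real
  shows "lam > 0 \<Longrightarrow> integral {c..} (\<lambda>s. K * exp (- lam * s)) = K * exp (- lam * c) / lam"
  using integral_unique[OF has_integral_mult_right[OF has_integral_exp_minus_to_infinity[of lam c], of K]]
  by simp

lemma has_integral_exp_minus_backward:
  fixes lam K t :: real
  assumes "lam > 0" "0 \<le> t"
  shows "((\<lambda>s. K * exp (- lam * (t - s))) has_integral (K / lam - K * exp (- lam * t) / lam)) {0..t}"
proof -
  have "((\<lambda>s. K * exp (- lam * (t - s))) has_integral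
      (K * exp (- lam * (t - t)) / lam - K * exp (- lam * (t - 0)) / lam)) {0..t}"
  proof (rule fundamental_theorem_of_calculus[OF assms(2)])
    fix x assume "x \<in> {0..t}"
    have "((\<lambda>s. K * exp (- lam * (t - s)) / lam) has_real_derivative K * exp (- lam * (t - x)))
        (at x within {0..t})"
      by (rule derivative_eq_intros refl)+ (use assms in \<open>simp_all add: field_simps\<close>)
    then show "((\<lambda>s. K * exp (- lam * (t - s)) / lam) has_vector_derivative K * exp (- lam * (t - x)))
        (at x within {0..t})"
      by (simp add: has_real_derivative_iff_has_vector_derivative)
  qed
  then show ?thesis by simp
qed

section \<open>Contractions on balls of continuous functions\<close>

definition cball_cont :: "('b \<Rightarrow> real) \<Rightarrow> 'a::topological_space set \<Rightarrow> real \<Rightarrow> ('a \<Rightarrow> 'b::topological_space) set"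
  where "cball_cont nrm S r = {z. continuous_on S z \<and> (\<forall>t\<in>S. nrm (z t) \<le> r)}"

context
  fixes nrm :: "real^'n \<Rightarrow> real"
  assumes nrm: "is_norm nrm"
begin

lemma is_norm_uniform_limit:
  fixes zs :: "nat \<Rightarrow> 'a::topological_space \<Rightarrow> real^'n"
  assumes cont: "\<And>n. continuous_on S (zs n)"
    and Cauchy: "\<And>m n t. n \<le> m \<Longrightarrow> t \<in> S \<Longrightarrow> nrm (zs m t - zs n t) \<le> B n"
    and B: "B \<longlonglongrightarrow> 0"
  obtains z where "continuous_on S z" "\<And>t. t \<in> S \<Longrightarrow> (\<lambda>n. zs n t) \<longlonglongrightarrow> z t"
    "\<And>n t. t \<in> S \<Longrightarrow> nrm (z t - zs n t) \<le> B n"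
proof -
  obtain c where c: "c > 0" "\<And>x. c * norm x \<le> nrm x" using is_norm_ge_norm[OF nrm] by blast
  have "uniformly_Cauchy_on S zs"
  proof (rule uniformly_Cauchy_onI)
    fix e :: real assume "e > 0"
    then obtain M where M: "\<And>n. n \<ge> M \<Longrightarrow> \<bar>B n\<bar> < c * e"
      using LIMSEQ_D[OF B, of "c * e"] c(1) by auto
    have "dist (zs m t) (zs n t) < e" if "M \<le> n" "n \<le> m" "t \<in> S" for m n t
    proof -
      have "c * norm (zs m t - zs n t) < c * e"
        using c(2) Cauchy[OF that(2,3)] M[OF that(1)] by (meson abs_ge_self le_less_trans order.trans)
      then show ?thesis using c(1) by (simp add: dist_norm)
    qed
    then show "\<exists>M. \<forall>t\<in>S. \<forall>m\<ge>M. \<forall>n\<ge>M. dist (zs m t) (zs n t) < e"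
      by (metis dist_commute nle_le)
  qed
  then obtain z where z: "uniform_limit S zs z sequentially"
    using Cauchy_uniformly_convergent uniformly_convergent_on_def by blast
  have lim: "(\<lambda>n. zs n t) \<longlonglongrightarrow> z t" if "t \<in> S" for t
    using tendsto_uniform_limitI[OF z that] .
  have "nrm (z t - zs n t) \<le> B n" if "t \<in> S" for n t
  proof (rule LIMSEQ_le_const2)
    show "(\<lambda>m. nrm (zs m t - zs n t)) \<longlonglongrightarrow> nrm (z t - zs n t)"
      by (intro isCont_tendsto_compose[OF isCont_is_norm[OF nrm]] tendsto_intros lim that)
  qed (use Cauchy that in auto)
  moreover have "continuous_on S z"
    using uniform_limit_theorem[OF _ z] cont by auto
  ultimately show ?thesis using that lim by blast
qed

text \<open>Banach's fixed point theorem for the Picard iterates \<open>F\<^sup>n 0\<close> in the sup-distance induced by \<open>nrm\<close>.\<close>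
lemma cball_cont_contraction_fixed_point:
  fixes F :: "('a::topological_space \<Rightarrow> real^'n) \<Rightarrow> 'a \<Rightarrow> real^'n"
  assumes "0 \<le> r" "0 \<le> q" "q < 1"
    and maps: "\<And>z. z \<in> cball_cont nrm S r \<Longrightarrow> F z \<in> cball_cont nrm S r"
    and contr: "\<And>z1 z2 d t. z1 \<in> cball_cont nrm S r \<Longrightarrow> z2 \<in> cball_cont nrm S r \<Longrightarrow> 0 \<le> d \<Longrightarrow>
      (\<forall>s\<in>S. nrm (z1 s - z2 s) \<le> d) \<Longrightarrow> t \<in> S \<Longrightarrow> nrm (F z1 t - F z2 t) \<le> q * d"
  obtains z where "z \<in> cball_cont nrm S r" "\<And>t. t \<in> S \<Longrightarrow> F z t = z t"
proof -
  define zs where "zs n = (F ^^ n) (\<lambda>_. 0)" for n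
  have zs_Suc: "zs (Suc n) = F (zs n)" for n by (simp add: zs_def)
  have zs_in: "zs n \<in> cball_cont nrm S r" for n
  proof (induction n)
    case 0
    show ?case using \<open>0 \<le> r\<close> by (simp add: zs_def cball_cont_def is_norm_zero[OF nrm])
  qed (simp add: zs_Suc maps)
  have step: "\<forall>t\<in>S. nrm (zs (Suc k) t - zs k t) \<le> q ^ k * r" for k
  proof (induction k)
    case 0
    show ?case using zs_in[of 1] by (simp add: zs_def cball_cont_def)
  next
    case (Suc k)
    have "nrm (F (zs (Suc k)) t - F (zs k) t) \<le> q * (q ^ k * r)" if "t \<in> S" for t
      by (rule contr[OF zs_in zs_in _ Suc that]) (use \<open>0 \<le> q\<close> \<open>0 \<le> r\<close> in simp)
    then show ?case by (simp add: zs_Suc[of "Suc k"] zs_Suc[of k] mult.assoc)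
  qed
  have Cauchy: "nrm (zs m t - zs n t) \<le> q ^ n * r / (1 - q)" if "n \<le> m" "t \<in> S" for m n t
  proof -
    have "nrm (zs (n + j) t - zs n t) \<le> (q ^ n - q ^ (n + j)) / (1 - q) * r" for j
    proof (induction j)
      case (Suc j)
      have "nrm (zs (n + Suc j) t - zs n t) \<le> nrm (zs (Suc (n + j)) t - zs (n + j) t) + nrm (zs (n + j) t - zs n t)"
        using is_norm_triangle[OF nrm, of "zs (Suc (n + j)) t - zs (n + j) t" "zs (n + j) t - zs n t"] by simp
      also have "\<dots> \<le> q ^ (n + j) * r + (q ^ n - q ^ (n + j)) / (1 - q) * r"
        using step[of "n + j"] \<open>t \<in> S\<close> Suc by (intro add_mono) auto
      also have "\<dots> = (q ^ n - q ^ (n + Suc j)) / (1 - q) * r"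
        using \<open>q < 1\<close> by (simp add: field_simps)
      finally show ?case .
    qed (simp add: is_norm_zero[OF nrm])
    moreover obtain j where "m = n + j" using \<open>n \<le> m\<close> le_Suc_ex by blast
    moreover have "(q ^ n - q ^ (n + j)) / (1 - q) * r \<le> q ^ n * r / (1 - q)"
      using assms(1-3) by (simp add: field_simps mult_left_le_one_le)
    ultimately show ?thesis by (meson order.trans)
  qed
  have B: "(\<lambda>n. q ^ n * r / (1 - q)) \<longlonglongrightarrow> 0"
    using LIMSEQ_power_zero[of q] assms(2,3) by (auto intro: tendsto_divide_zero tendsto_mult_left_zero)
  obtain z where z: "continuous_on S z" "\<And>t. t \<in> S \<Longrightarrow> (\<lambda>n. zs n t) \<longlonglongrightarrow> z t"
    "\<And>n t. t \<in> S \<Longrightarrow> nrm (z t - zs n t) \<le> q ^ n * r / (1 - q)"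
    using is_norm_uniform_limit[of S zs, OF _ Cauchy B] zs_in unfolding cball_cont_def by blast
  have "nrm (z t) \<le> r" if "t \<in> S" for t
    using zs_in by (intro LIMSEQ_le_const2[OF isCont_tendsto_compose[OF isCont_is_norm[OF nrm] z(2)[OF that]]])
      (auto simp: cball_cont_def that)
  then have z_in: "z \<in> cball_cont nrm S r" using z(1) by (simp add: cball_cont_def)
  have "F z t = z t" if "t \<in> S" for t
  proof -
    have "(\<lambda>n. nrm (F z t - zs (Suc n) t)) \<longlonglongrightarrow> nrm (F z t - z t)"
      by (intro isCont_tendsto_compose[OF isCont_is_norm[OF nrm]] tendsto_intros
          LIMSEQ_Suc[OF z(2)[OF that]])
    moreover have "nrm (F z t - zs (Suc n) t) \<le> q * (q ^ n * r / (1 - q))" for n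
      unfolding zs_Suc using assms(1-3) z(3) that by (intro contr[OF z_in zs_in]) auto
    moreover have "(\<lambda>n. q * (q ^ n * r / (1 - q))) \<longlonglongrightarrow> 0"
      using tendsto_mult_right_zero[OF B] .
    ultimately have "nrm (F z t - z t) \<le> 0" by (intro LIMSEQ_le) auto
    then show ?thesis using is_norm_nonneg[OF nrm] is_norm_eq_0_iff[OF nrm] by (metis antisym eq_iff_diff_eq_0)
  qed
  with z_in that show ?thesis by blast
qed

end

section \<open>The Green operator of a dichotomy\<close>

text \<open>
  Separate constants \<open>a\<close> and \<open>b\<close> allow \<open>b = 0\<close> for a contraction and \<open>a = 0\<close> for an
  expansion.
\<close>
locale dichotomy_estimates =
  fixes nrm :: "real^'n \<Rightarrow> real" and A :: "real \<Rightarrow> real^'n^'n" and T :: "real \<Rightarrow> real \<Rightarrow> real^'n^'n"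
    and P :: "real \<Rightarrow> real^'n^'n" and a b lam :: real
  assumes nrm: "is_norm nrm" and A: "continuous_on {0..} A" and T: "is_transition_matrix A T"
    and commute: "\<And>t s. 0 \<le> t \<Longrightarrow> 0 \<le> s \<Longrightarrow> P t ** T t s = T t s ** P s"
    and a: "0 \<le> a" and b: "0 \<le> b" and lam: "0 < lam"
    and stable: "\<And>t s v. 0 \<le> s \<Longrightarrow> s \<le> t \<Longrightarrow>
      nrm (T t s *v (P s *v v)) \<le> a * exp (- lam * (t - s)) * nrm v"
    and unstable: "\<And>t s v. 0 \<le> t \<Longrightarrow> t \<le> s \<Longrightarrow>
      nrm (T t s *v ((mat 1 - P s) *v v)) \<le> b * exp (- lam * (s - t)) * nrm v"
begin

lemma transition_factor_0: "0 \<le> t \<Longrightarrow> 0 \<le> s \<Longrightarrow> T t s *v v = T t 0 *v (T 0 s *v v)"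
  using transition_matrix_cocycle[OF A T, of s 0 t] by (simp add: matrix_vector_mul_assoc)

lemma stable_factor_0:
  assumes "0 \<le> t" "0 \<le> s"
  shows "T t s *v (P s *v v) = T t 0 *v (P 0 *v (T 0 s *v v))"
proof -
  have "T t s *v (P s *v v) = T t 0 *v ((T 0 s ** P s) *v v)"
    using transition_matrix_cocycle[OF A T, of s 0 t] assms
    by (simp add: matrix_vector_mul_assoc matrix_mul_assoc)
  also have "\<dots> = T t 0 *v (P 0 *v (T 0 s *v v))"
    using commute[of 0 s] assms by (simp add: matrix_vector_mul_assoc)
  finally show ?thesis .
qed

lemma unstable_factor_0:
  assumes "0 \<le> t" "0 \<le> s"
  shows "T t s *v ((mat 1 - P s) *v v) = T t 0 *v ((mat 1 - P 0) *v (T 0 s *v v))"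
  using transition_factor_0[OF assms] stable_factor_0[OF assms]
  by (simp add: matrix_vector_mult_diff_rdistrib matrix_vector_mult_diff_distrib)

definition unstable_part :: "(real \<Rightarrow> real^'n) \<Rightarrow> real \<Rightarrow> real^'n" where
  "unstable_part h s = (mat 1 - P 0) *v (T 0 s *v h s)"

text \<open>
  By \<open>stable_factor_0\<close> and \<open>unstable_factor_0\<close> this is the usual Green operator
  \<open>\<integral>\<^sub>0\<^sup>t T(t,s) P(s) h(s) ds - \<integral>\<^sub>t\<^sup>\<tau> T(t,s) (I - P(s)) h(s) ds\<close> (see \<open>green_op_eq_integrals\<close>);
  pulling out \<open>T t 0\<close> makes the dependence on \<open>t\<close> differentiable by the product rule.
\<close>
definition green_op :: "ereal \<Rightarrow> (real \<Rightarrow> real^'n) \<Rightarrow> real \<Rightarrow> real^'n" where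
  "green_op \<tau> h t = T t 0 *v (integral {0..t} (\<lambda>s. T 0 s *v h s) - integral (ivl \<tau>) (unstable_part h))"

lemma unstable_part_bound: "0 \<le> s \<Longrightarrow> nrm (unstable_part h s) \<le> b * exp (- lam * s) * nrm (h s)"
  using unstable_factor_0[of 0 s "h s"] unstable[of 0 s "h s"] transition_matrix_diag[OF A T, of 0]
  unfolding unstable_part_def by simp

lemma continuous_on_transition_from_0:
  "continuous_on (ivl \<tau>) h \<Longrightarrow> continuous_on (ivl \<tau>) (\<lambda>s. T 0 s *v h s)"
  using bounded_bilinear.continuous_on[OF bounded_bilinear_matrix_vector_mult
      continuous_on_subset[OF transition_matrix_continuous_on_initial[OF A T, of 0] ivl_subset_atLeast]]
  by simp

lemma continuous_on_unstable_part:
  "continuous_on (ivl \<tau>) h \<Longrightarrow> continuous_on (ivl \<tau>) (unstable_part h)"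
  unfolding unstable_part_def
  by (rule bounded_linear.continuous_on[OF matrix_vector_mul_bounded_linear continuous_on_transition_from_0])

lemma unstable_part_absolutely_integrable:
  assumes h: "h \<in> cball_cont nrm (ivl \<tau>) M"
  shows "unstable_part h absolutely_integrable_on ivl \<tau>"
proof -
  obtain c where c: "c > 0" "\<And>x. c * norm x \<le> nrm x" using is_norm_ge_norm[OF nrm] by blast
  have M: "\<And>s. s \<in> ivl \<tau> \<Longrightarrow> nrm (h s) \<le> M" using h by (simp add: cball_cont_def)
  show ?thesis
  proof (rule measurable_bounded_by_integrable_imp_absolutely_integrable)
  show "unstable_part h \<in> borel_measurable (lebesgue_on (ivl \<tau>))"
    using h by (intro continuous_imp_measurable_on_sets_lebesgue continuous_on_unstable_part ivl_lebesgue)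
      (simp add: cball_cont_def)
  show "ivl \<tau> \<in> sets lebesgue" by (rule ivl_lebesgue)
  show "(\<lambda>s. (b * \<bar>M\<bar> / c) * exp (- lam * s)) integrable_on ivl \<tau>"
    by (rule integrable_on_exp_minus_subset[OF lam _ ivl_subset_atLeast ivl_lebesgue]) (use b c in simp)
  fix s assume s: "s \<in> ivl \<tau>"
  have "c * norm (unstable_part h s) \<le> b * exp (- lam * s) * nrm (h s)"
    using c(2) unstable_part_bound s by (meson order.trans subsetD ivl_subset_atLeast atLeast_iff)
  also have "\<dots> \<le> b * exp (- lam * s) * \<bar>M\<bar>" using M[OF s] b by (intro mult_left_mono) auto
  finally show "norm (unstable_part h s) \<le> (b * \<bar>M\<bar> / c) * exp (- lam * s)"
    using c(1) by (simp add: field_simps)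
  qed
qed

lemma has_vector_derivative_green_op:
  assumes h: "continuous_on (ivl \<tau>) h" and t: "t \<in> ivl \<tau>"
  shows "(green_op \<tau> h has_vector_derivative (A t *v green_op \<tau> h t + h t)) (at t within ivl \<tau>)"
proof -
  define g where "g s = T 0 s *v h s" for s
  define c where "c = integral (ivl \<tau>) (unstable_part h)"
  have t0: "0 \<le> t" using t unfolding ivl_def by simp
  obtain t' where t': "t < t'" "t' \<in> ivl \<tau>" using ivl_right_nbhd[OF t] by blast
  have "continuous_on {0..t'} g"
    unfolding g_def
    by (rule continuous_on_subset[OF continuous_on_transition_from_0[OF h] atLeastAtMost_subset_ivl[OF t'(2)]])
  then have "((\<lambda>u. integral {0..u} g) has_vector_derivative g t) (at t within {0..t'})"
    by (rule integral_has_vector_derivative) (use t0 t' in simp)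
  then have "((\<lambda>u. integral {0..u} g) has_vector_derivative g t) (at t within ivl \<tau> \<inter> {..<t'})"
    by (rule has_vector_derivative_within_subset) (auto simp: ivl_def)
  moreover have "at t within ivl \<tau> \<inter> {..<t'} = at t within ivl \<tau>"
    by (rule at_within_nhd[of t "{..<t'}"]) (use t' in auto)
  ultimately have "((\<lambda>u. integral {0..u} g - c) has_vector_derivative g t) (at t within ivl \<tau>)"
    using has_vector_derivative_diff[OF _ has_vector_derivative_const, of _ "g t"] by fastforce
  from bounded_bilinear.has_vector_derivative[OF bounded_bilinear_matrix_vector_mult
      has_vector_derivative_within_subset[OF transition_matrix_has_vector_derivative[OF A T order.refl t0]
        ivl_subset_atLeast] this]
  have "((\<lambda>u. T u 0 *v (integral {0..u} g - c)) has_vector_derivative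
      (T t 0 *v g t + (A t ** T t 0) *v (integral {0..t} g - c))) (at t within ivl \<tau>)" .
  moreover have "T t 0 *v g t = h t"
    unfolding g_def using transition_matrix_inverse[OF A T t0 order.refl]
    by (simp add: matrix_vector_mul_assoc)
  ultimately show ?thesis
    unfolding green_op_def g_def c_def by (simp add: matrix_vector_mul_assoc add.commute)
qed

lemma continuous_on_green_op:
  assumes "continuous_on (ivl \<tau>) h"
  shows "continuous_on (ivl \<tau>) (green_op \<tau> h)"
  using has_vector_derivative_continuous[OF has_vector_derivative_green_op[OF assms]]
  unfolding continuous_on_eq_continuous_within by blast

lemma green_op_eq_integrals:
  assumes h: "h \<in> cball_cont nrm (ivl \<tau>) M" and t: "t \<in> ivl \<tau>"
  shows "(\<lambda>s. T t s *v (P s *v h s)) integrable_on {0..t}"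
    and "(\<lambda>s. T t s *v ((mat 1 - P s) *v h s)) integrable_on (ivl \<tau> \<inter> {t<..})"
    and "green_op \<tau> h t = integral {0..t} (\<lambda>s. T t s *v (P s *v h s))
           - integral (ivl \<tau> \<inter> {t<..}) (\<lambda>s. T t s *v ((mat 1 - P s) *v h s))"
proof -
  define p where "p s = P 0 *v (T 0 s *v h s)" for s
  let ?w = "unstable_part h"
  have t0: "0 \<le> t" using t unfolding ivl_def by simp
  have sub: "{0..t} \<subseteq> ivl \<tau>" by (rule atLeastAtMost_subset_ivl[OF t])
  have ip: "p integrable_on {0..t}" unfolding p_def
    using h sub by (intro integrable_continuous_real bounded_linear.continuous_on[OF matrix_vector_mul_bounded_linear]
        continuous_on_subset[OF continuous_on_transition_from_0]) (auto simp: cball_cont_def)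
  have w: "?w absolutely_integrable_on ivl \<tau>" by (rule unstable_part_absolutely_integrable[OF h])
  have iw0: "?w integrable_on {0..t}"
    by (rule set_lebesgue_integral_eq_integral(1)[OF set_integrable_subset[OF w _ sub]]) simp
  have iw1: "?w integrable_on (ivl \<tau> \<inter> {t<..})"
    by (rule set_lebesgue_integral_eq_integral(1)[OF set_integrable_subset[OF w]])
      (auto intro: ivl_lebesgue)
  have "integral {0..t} (\<lambda>s. T 0 s *v h s) = integral {0..t} (\<lambda>s. p s + ?w s)"
    unfolding p_def unstable_part_def by (simp add: matrix_vector_mult_diff_rdistrib)
  also have "\<dots> = integral {0..t} p + integral {0..t} ?w" by (rule integral_add[OF ip iw0])
  finally have split_t: "integral {0..t} (\<lambda>s. T 0 s *v h s) = integral {0..t} p + integral {0..t} ?w" .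
  have "{0..t} \<inter> (ivl \<tau> \<inter> {t<..}) = {}" by auto
  then have "(?w has_integral (integral {0..t} ?w + integral (ivl \<tau> \<inter> {t<..}) ?w)) ({0..t} \<union> (ivl \<tau> \<inter> {t<..}))"
    using has_integral_Un[OF integrable_integral[OF iw0] integrable_integral[OF iw1]] by simp
  moreover have "{0..t} \<union> (ivl \<tau> \<inter> {t<..}) = ivl \<tau>" using sub by (auto simp: ivl_def)
  ultimately have split_\<tau>: "integral (ivl \<tau>) ?w = integral {0..t} ?w + integral (ivl \<tau> \<inter> {t<..}) ?w"
    using integral_unique by metis
  have stable_eq: "T t 0 *v p s = T t s *v (P s *v h s)" if "s \<in> {0..t}" for s
    unfolding p_def using that t0 by (intro stable_factor_0[symmetric]) auto
  have unstable_eq: "T t 0 *v ?w s = T t s *v ((mat 1 - P s) *v h s)" if "s \<in> ivl \<tau> \<inter> {t<..}" for s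
    unfolding unstable_part_def using that t0 by (intro unstable_factor_0[symmetric]) (auto simp: ivl_def)
  have lin_p: "integral {0..t} (\<lambda>s. T t 0 *v p s) = T t 0 *v integral {0..t} p"
    and lin_w: "integral (ivl \<tau> \<inter> {t<..}) (\<lambda>s. T t 0 *v ?w s) = T t 0 *v integral (ivl \<tau> \<inter> {t<..}) ?w"
    using integral_linear[OF ip matrix_vector_mul_bounded_linear[of "T t 0"]]
      integral_linear[OF iw1 matrix_vector_mul_bounded_linear[of "T t 0"]] by (simp_all add: o_def)
  show "(\<lambda>s. T t s *v (P s *v h s)) integrable_on {0..t}"
    using integrable_linear[OF ip matrix_vector_mul_bounded_linear[of "T t 0"]] stable_eq
    by (auto simp: o_def intro: integrable_eq)
  show "(\<lambda>s. T t s *v ((mat 1 - P s) *v h s)) integrable_on (ivl \<tau> \<inter> {t<..})"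
    using integrable_linear[OF iw1 matrix_vector_mul_bounded_linear[of "T t 0"]] unstable_eq
    by (auto simp: o_def intro: integrable_eq)
  have "green_op \<tau> h t = T t 0 *v integral {0..t} p - T t 0 *v integral (ivl \<tau> \<inter> {t<..}) ?w"
    unfolding green_op_def split_t split_\<tau> by (simp add: matrix_vector_mult_diff_distrib)
  moreover have "integral {0..t} (\<lambda>s. T t 0 *v p s) = integral {0..t} (\<lambda>s. T t s *v (P s *v h s))"
    by (rule integral_cong[OF stable_eq])
  moreover have "integral (ivl \<tau> \<inter> {t<..}) (\<lambda>s. T t 0 *v ?w s)
      = integral (ivl \<tau> \<inter> {t<..}) (\<lambda>s. T t s *v ((mat 1 - P s) *v h s))"
    by (rule integral_cong[OF unstable_eq])
  ultimately show "green_op \<tau> h t = integral {0..t} (\<lambda>s. T t s *v (P s *v h s))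
           - integral (ivl \<tau> \<inter> {t<..}) (\<lambda>s. T t s *v ((mat 1 - P s) *v h s))"
    using lin_p lin_w by simp
qed

lemma stable_integral_bound:
  assumes int: "(\<lambda>s. T t s *v (P s *v h s)) integrable_on {0..t}" and "0 \<le> t"
    and M: "\<And>s. s \<in> {0..t} \<Longrightarrow> nrm (h s) \<le> M"
  shows "nrm (integral {0..t} (\<lambda>s. T t s *v (P s *v h s))) \<le> a * M / lam"
proof -
  have M0: "0 \<le> M" using M[of 0] is_norm_nonneg[OF nrm] \<open>0 \<le> t\<close> by (meson atLeastAtMost_iff order.trans order.refl)
  have exp_int: "((\<lambda>s. (a * M) * exp (- lam * (t - s))) has_integral ((a * M) / lam - (a * M) * exp (- lam * t) / lam)) {0..t}"
    by (rule has_integral_exp_minus_backward[OF lam \<open>0 \<le> t\<close>])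
  have "nrm (integral {0..t} (\<lambda>s. T t s *v (P s *v h s))) \<le> integral {0..t} (\<lambda>s. (a * M) * exp (- lam * (t - s)))"
  proof (rule is_norm_integral_le[OF nrm int])
    show "(\<lambda>s. (a * M) * exp (- lam * (t - s))) integrable_on {0..t}" using exp_int by blast
    fix s assume s: "s \<in> {0..t}"
    have "nrm (T t s *v (P s *v h s)) \<le> a * exp (- lam * (t - s)) * nrm (h s)" by (rule stable) (use s in auto)
    also have "\<dots> \<le> a * exp (- lam * (t - s)) * M" using M[OF s] a by (intro mult_left_mono) auto
    finally show "nrm (T t s *v (P s *v h s)) \<le> (a * M) * exp (- lam * (t - s))" by (simp add: algebra_simps)
  qed
  also have "\<dots> = (a * M) / lam - (a * M) * exp (- lam * t) / lam" using exp_int by (rule integral_unique)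
  also have "\<dots> \<le> a * M / lam" using a M0 lam by (simp add: divide_nonneg_pos)
  finally show ?thesis .
qed

lemma unstable_integral_bound:
  assumes int: "(\<lambda>s. T t s *v ((mat 1 - P s) *v h s)) integrable_on U"
    and U: "U \<subseteq> {t..}" "U \<in> sets lebesgue" and "0 \<le> t"
    and M: "\<And>s. s \<in> U \<Longrightarrow> nrm (h s) \<le> M" "0 \<le> M"
  shows "nrm (integral U (\<lambda>s. T t s *v ((mat 1 - P s) *v h s))) \<le> b * M / lam"
proof -
  define K where "K = b * M * exp (lam * t)"
  have K0: "0 \<le> K" unfolding K_def using b M(2) by simp
  have "nrm (integral U (\<lambda>s. T t s *v ((mat 1 - P s) *v h s))) \<le> integral U (\<lambda>s. K * exp (- lam * s))"
  proof (rule is_norm_integral_le[OF nrm int])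
    show "(\<lambda>s. K * exp (- lam * s)) integrable_on U" by (rule integrable_on_exp_minus_subset[OF lam K0 U])
    fix s assume s: "s \<in> U"
    have "nrm (T t s *v ((mat 1 - P s) *v h s)) \<le> b * exp (- lam * (s - t)) * nrm (h s)"
      by (rule unstable) (use s U \<open>0 \<le> t\<close> in auto)
    also have "\<dots> \<le> b * exp (- lam * (s - t)) * M" using M(1)[OF s] b by (intro mult_left_mono) auto
    also have "\<dots> = K * exp (- lam * s)" unfolding K_def by (simp add: exp_diff exp_minus field_simps)
    finally show "nrm (T t s *v ((mat 1 - P s) *v h s)) \<le> K * exp (- lam * s)" .
  qed
  also have "\<dots> \<le> integral {t..} (\<lambda>s. K * exp (- lam * s))"
    by (rule integral_subset_le[OF U(1) integrable_on_exp_minus_subset[OF lam K0 U]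
          integrable_on_exp_minus_subset[OF lam K0 order.refl]]) (use K0 in auto)
  also have "\<dots> = b * M / lam"
    unfolding integral_exp_minus_to_infinity[OF lam] K_def by (simp add: exp_minus field_simps)
  finally show ?thesis .
qed

lemma green_op_bound:
  assumes h: "h \<in> cball_cont nrm (ivl \<tau>) M" and t: "t \<in> ivl \<tau>"
  shows "nrm (green_op \<tau> h t) \<le> (a + b) / lam * M"
proof -
  have t0: "0 \<le> t" and M: "\<And>s. s \<in> ivl \<tau> \<Longrightarrow> nrm (h s) \<le> M" and M0: "0 \<le> M"
    using t h is_norm_nonneg[OF nrm, of "h t"] by (auto simp: ivl_def cball_cont_def)
  have "nrm (green_op \<tau> h t) \<le> nrm (integral {0..t} (\<lambda>s. T t s *v (P s *v h s)))
      + nrm (integral (ivl \<tau> \<inter> {t<..}) (\<lambda>s. T t s *v ((mat 1 - P s) *v h s)))"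
    unfolding green_op_eq_integrals(3)[OF h t] by (rule is_norm_triangle_diff[OF nrm])
  also have "\<dots> \<le> a * M / lam + b * M / lam"
  proof (rule add_mono)
    show "nrm (integral {0..t} (\<lambda>s. T t s *v (P s *v h s))) \<le> a * M / lam"
      by (rule stable_integral_bound[OF green_op_eq_integrals(1)[OF h t] t0])
        (use M atLeastAtMost_subset_ivl[OF t] in blast)
    show "nrm (integral (ivl \<tau> \<inter> {t<..}) (\<lambda>s. T t s *v ((mat 1 - P s) *v h s))) \<le> b * M / lam"
      by (rule unstable_integral_bound[OF green_op_eq_integrals(2)[OF h t] _ _ t0 _ M0])
        (use M ivl_lebesgue in auto)
  qed
  finally show ?thesis by (simp add: add_divide_distrib distrib_right)
qed

lemma green_op_diff:
  assumes h1: "h1 \<in> cball_cont nrm (ivl \<tau>) M1" and h2: "h2 \<in> cball_cont nrm (ivl \<tau>) M2"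
    and t: "t \<in> ivl \<tau>"
  shows "green_op \<tau> (\<lambda>s. h1 s - h2 s) t = green_op \<tau> h1 t - green_op \<tau> h2 t"
proof -
  have int_0t: "(\<lambda>s. T 0 s *v h s) integrable_on {0..t}" if "h \<in> cball_cont nrm (ivl \<tau>) M" for h M
    using that atLeastAtMost_subset_ivl[OF t]
    by (intro integrable_continuous_real continuous_on_subset[OF continuous_on_transition_from_0])
      (auto simp: cball_cont_def)
  have int_unstable: "unstable_part h integrable_on ivl \<tau>" if "h \<in> cball_cont nrm (ivl \<tau>) M" for h M
    using set_lebesgue_integral_eq_integral(1)[OF unstable_part_absolutely_integrable[OF that]] .
  have diff_0t: "(\<lambda>s. T 0 s *v (h1 s - h2 s)) = (\<lambda>s. T 0 s *v h1 s - T 0 s *v h2 s)"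
    and diff_unstable: "unstable_part (\<lambda>s. h1 s - h2 s) = (\<lambda>s. unstable_part h1 s - unstable_part h2 s)"
    by (simp_all add: fun_eq_iff unstable_part_def matrix_vector_mult_diff_distrib)
  show ?thesis
    unfolding green_op_def diff_0t diff_unstable integral_diff[OF int_0t[OF h1] int_0t[OF h2]]
      integral_diff[OF int_unstable[OF h1] int_unstable[OF h2]]
    by (simp add: matrix_vector_mult_diff_distrib algebra_simps)
qed

end

section \<open>Shadowing\<close>

lemma continuous_on_compose_time:
  assumes "continuous_on ({0..} \<times> UNIV) (\<lambda>(t, x). f t x)" "continuous_on S u" "S \<subseteq> {0..}"
  shows "continuous_on S (\<lambda>t. f t (u t))"
proof -
  have "(\<lambda>t. (t, u t)) ` S \<subseteq> {0..} \<times> UNIV" using assms(3) by auto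
  from continuous_on_compose2[OF assms(1) continuous_on_Pair[OF continuous_on_id assms(2)] this]
  show ?thesis by simp
qed

lemma pseudosolutionE:
  assumes y: "is_pseudosolution nrm g \<tau> y" and err: "pseudo_err nrm g \<tau> y \<le> \<epsilon>"
  obtains y' where "\<And>t. t \<in> ivl \<tau> \<Longrightarrow> (y has_vector_derivative y' t) (at t within ivl \<tau>)"
    "continuous_on (ivl \<tau>) y'" "\<And>t. t \<in> ivl \<tau> \<Longrightarrow> nrm (y' t - g t (y t)) \<le> \<epsilon>"
proof
  let ?y' = "\<lambda>t. vector_derivative y (at t within ivl \<tau>)"
  show "(y has_vector_derivative ?y' t) (at t within ivl \<tau>)" if "t \<in> ivl \<tau>" for t
    using y that vector_derivative_works unfolding is_pseudosolution_def by blast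
  show "continuous_on (ivl \<tau>) ?y'" using y unfolding is_pseudosolution_def by blast
  show "nrm (?y' t - g t (y t)) \<le> \<epsilon>" if "t \<in> ivl \<tau>" for t
    using cSUP_upper[OF that, of "\<lambda>t. nrm (?y' t - g t (y t))"] y err
    unfolding is_pseudosolution_def pseudo_err_def by linarith
qed

context dichotomy_estimates
begin

lemma shadowing_solution:
  fixes f :: "real \<Rightarrow> real^'n \<Rightarrow> real^'n" and y :: "real \<Rightarrow> real^'n" and L :: real
  defines "\<kappa> \<equiv> (a + b) / lam / (1 - (a + b) / lam * L)"
  assumes f: "continuous_on ({0..} \<times> UNIV) (\<lambda>(t, x). f t x)"
    and lip: "\<forall>t\<ge>0. \<forall>x1\<in>nball nrm 0 (\<rho> + \<delta>). \<forall>x2\<in>nball nrm 0 (\<rho> + \<delta>).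
           nrm (f t x1 - f t x2) \<le> L * nrm (x1 - x2)"
    and L: "0 \<le> L" "(a + b) / lam * L < 1" and \<epsilon>: "0 \<le> \<epsilon>" "\<kappa> * \<epsilon> \<le> \<delta>"
    and y: "is_pseudosolution nrm (\<lambda>t x. A t *v x + f t x) \<tau> y"
      "pseudo_err nrm (\<lambda>t x. A t *v x + f t x) \<tau> y \<le> \<epsilon>" "\<forall>t\<in>ivl \<tau>. y t \<in> nball nrm 0 \<rho>"
  shows "\<exists>x. is_solution (\<lambda>t x. A t *v x + f t x) \<tau> x \<and> (\<forall>t\<in>ivl \<tau>. nrm (x t - y t) \<le> \<kappa> * \<epsilon>)"
proof -
  define S where "S = ivl \<tau>"
  define K where "K = (a + b) / lam"
  define r where "r = \<kappa> * \<epsilon>"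
  have K: "0 \<le> K" "K * L < 1" unfolding K_def using a b lam L by auto
  have r: "0 \<le> r" "r \<le> \<delta>" and r_eq: "K * (L * r + \<epsilon>) = r"
    using K \<epsilon> unfolding r_def \<kappa>_def K_def[symmetric] by (auto simp: field_simps)
  have S: "S \<subseteq> {0..}" unfolding S_def by (rule ivl_subset_atLeast)
  obtain y' where y': "\<And>t. t \<in> S \<Longrightarrow> (y has_vector_derivative y' t) (at t within S)" "continuous_on S y'"
    "\<And>t. t \<in> S \<Longrightarrow> nrm (y' t - (A t *v y t + f t (y t))) \<le> \<epsilon>"
    using pseudosolutionE[OF y(1,2)] unfolding S_def by metis
  have y_cont: "continuous_on S y"
    using has_vector_derivative_continuous[OF y'(1)] by (simp add: continuous_on_eq_continuous_within)
  define e where "e t = y' t - (A t *v y t + f t (y t))" for t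
  have e_cont: "continuous_on S e"
    unfolding e_def using continuous_on_subset[OF A S] S
    by (intro continuous_intros y'(2) y_cont continuous_on_compose_time[OF f]
        bounded_bilinear.continuous_on[OF bounded_bilinear_matrix_vector_mult])
  define h where "h z t = f t (y t + z t) - f t (y t) - e t" for z :: "real \<Rightarrow> real^'n" and t
  have lip_y: "nrm (f t (y t + v) - f t (y t + w)) \<le> L * nrm (v - w)"
    if "t \<in> S" "nrm v \<le> r" "nrm w \<le> r" for t v w
  proof -
    have "nrm (y t) \<le> \<rho>" using y(3) that(1) unfolding S_def nball_def by simp
    then have "nrm (y t + u) \<le> \<rho> + \<delta>" if "nrm u \<le> r" for u
      using is_norm_triangle[OF nrm, of "y t" u] that r(2) by linarith
    then have "y t + v \<in> nball nrm 0 (\<rho> + \<delta>)" "y t + w \<in> nball nrm 0 (\<rho> + \<delta>)"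
      using that(2,3) unfolding nball_def by simp_all
    then have "nrm (f t (y t + v) - f t (y t + w)) \<le> L * nrm ((y t + v) - (y t + w))"
      using lip S that(1) by blast
    then show ?thesis by simp
  qed
  have h_in: "h z \<in> cball_cont nrm S (L * r + \<epsilon>)" if z: "z \<in> cball_cont nrm S r" for z
  proof -
    have "continuous_on S (h z)"
      unfolding h_def using z S
      by (intro continuous_intros e_cont y_cont continuous_on_compose_time[OF f]) (auto simp: cball_cont_def)
    moreover have "nrm (h z t) \<le> L * r + \<epsilon>" if "t \<in> S" for t
    proof -
      have "nrm (f t (y t + z t) - f t (y t + 0)) \<le> L * r"
        using lip_y[OF that, of "z t" 0] z that L(1) r(1)
        by (auto simp: cball_cont_def is_norm_zero[OF nrm] intro: order_trans mult_left_mono)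
      then show ?thesis
        using is_norm_triangle_diff[OF nrm, of "f t (y t + z t) - f t (y t)" "e t"] y'(3)[OF that]
        unfolding h_def e_def by simp
    qed
    ultimately show ?thesis by (simp add: cball_cont_def)
  qed
  define F where "F z = green_op \<tau> (h z)" for z
  have maps: "F z \<in> cball_cont nrm S r" if "z \<in> cball_cont nrm S r" for z
    using continuous_on_green_op[of \<tau> "h z"] green_op_bound[OF h_in[OF that, unfolded S_def]]
      h_in[OF that] r_eq
    unfolding F_def S_def cball_cont_def K_def by auto
  have contr: "nrm (F z1 t - F z2 t) \<le> K * L * d"
    if z12: "z1 \<in> cball_cont nrm S r" "z2 \<in> cball_cont nrm S r" and d: "0 \<le> d"
      "\<forall>s\<in>S. nrm (z1 s - z2 s) \<le> d" and t: "t \<in> S" for z1 z2 d t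
  proof -
    have "(\<lambda>s. h z1 s - h z2 s) \<in> cball_cont nrm S (L * d)"
    proof -
      have "nrm (h z1 s - h z2 s) \<le> L * d" if "s \<in> S" for s
      proof -
        have "nrm (h z1 s - h z2 s) \<le> L * nrm (z1 s - z2 s)"
          using lip_y[OF that, of "z1 s" "z2 s"] z12 that by (simp add: h_def cball_cont_def)
        also have "\<dots> \<le> L * d" using d(2) that L(1) by (simp add: mult_left_mono)
        finally show ?thesis .
      qed
      then show ?thesis
        using h_in[OF z12(1)] h_in[OF z12(2)] by (auto simp: cball_cont_def intro: continuous_on_diff)
    qed
    then have "nrm (green_op \<tau> (\<lambda>s. h z1 s - h z2 s) t) \<le> K * (L * d)"
      using green_op_bound t unfolding S_def K_def by blast
    then show ?thesis
      using green_op_diff[OF h_in[OF z12(1), unfolded S_def] h_in[OF z12(2), unfolded S_def]] t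
      unfolding F_def S_def by (simp add: mult.assoc)
  qed
  obtain z where z: "z \<in> cball_cont nrm S r" and fixed: "\<And>t. t \<in> S \<Longrightarrow> F z t = z t"
    using cball_cont_contraction_fixed_point[where F = F, OF nrm r(1) mult_nonneg_nonneg[OF K(1) L(1)] K(2)
        maps contr]
    by blast
  define x where "x t = y t + z t" for t
  have "(x has_vector_derivative A t *v x t + f t (x t)) (at t within S)" if t: "t \<in> S" for t
  proof -
    have hz: "continuous_on (ivl \<tau>) (h z)" using h_in[OF z] by (simp add: cball_cont_def S_def)
    have "(F z has_vector_derivative (A t *v z t + h z t)) (at t within S)"
      using has_vector_derivative_green_op[OF hz, of t] fixed[OF t] t unfolding F_def S_def by simp
    then have "(z has_vector_derivative (A t *v z t + h z t)) (at t within S)"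
      using has_vector_derivative_transform[OF t] fixed by metis
    from has_vector_derivative_add[OF y'(1)[OF t] this]
    show ?thesis
      unfolding x_def h_def e_def by (simp add: matrix_vector_right_distrib algebra_simps)
  qed
  moreover have "\<forall>t\<in>S. nrm (x t - y t) \<le> r" using z by (simp add: x_def cball_cont_def)
  ultimately show ?thesis unfolding is_solution_def S_def r_def by blast
qed

lemma cond_lipschitz_shadowing:
  fixes f :: "real \<Rightarrow> real^'n \<Rightarrow> real^'n"
  assumes f: "continuous_on ({0..} \<times> UNIV) (\<lambda>(t, x). f t x)"
    and lip: "\<forall>t\<ge>0. \<forall>x1\<in>nball nrm 0 (\<rho> + \<delta>). \<forall>x2\<in>nball nrm 0 (\<rho> + \<delta>).
           nrm (f t x1 - f t x2) \<le> L * nrm (x1 - x2)"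
    and L: "0 \<le> L" "(a + b) / lam * L < 1" and "0 < a + b" "0 < \<delta>"
  shows "cond_lipschitz_shadowing nrm (\<lambda>t x. A t *v x + f t x) (nball nrm 0 \<rho>)"
proof -
  define \<kappa> where "\<kappa> = (a + b) / lam / (1 - (a + b) / lam * L)"
  have "\<kappa> > 0" unfolding \<kappa>_def using \<open>0 < a + b\<close> lam L by simp
  have "\<exists>x. is_solution (\<lambda>t x. A t *v x + f t x) \<tau> x \<and> (\<forall>t\<in>ivl \<tau>. nrm (x t - y t) \<le> \<kappa> * \<epsilon>)"
    if "0 < \<epsilon>" "\<epsilon> \<le> \<delta> / \<kappa>" "is_pseudosolution nrm (\<lambda>t x. A t *v x + f t x) \<tau> y"
      "pseudo_err nrm (\<lambda>t x. A t *v x + f t x) \<tau> y \<le> \<epsilon>" "\<forall>t\<in>ivl \<tau>. y t \<in> nball nrm 0 \<rho>" for \<epsilon> \<tau> y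
  proof -
    have "\<kappa> * \<epsilon> \<le> \<delta>" using that(2) \<open>\<kappa> > 0\<close> by (simp add: pos_le_divide_eq mult.commute)
    then show ?thesis
      using shadowing_solution[OF f lip L less_imp_le[OF that(1)] _ that(3-5)] unfolding \<kappa>_def by blast
  qed
  then show ?thesis
    unfolding cond_lipschitz_shadowing_def using \<open>\<kappa> > 0\<close> \<open>0 < \<delta>\<close>
    by (intro exI[of _ "\<delta> / \<kappa>"] exI[of _ \<kappa>]) auto
qed

lemma dichotomy_estimates_contraction: "P = (\<lambda>_. mat 1) \<Longrightarrow> dichotomy_estimates nrm A T P a 0 lam"
  by unfold_locales (use nrm A T commute a lam stable in \<open>simp_all add: is_norm_zero\<close>)

lemma dichotomy_estimates_expansion: "P = (\<lambda>_. 0) \<Longrightarrow> dichotomy_estimates nrm A T P 0 b lam"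
  by unfold_locales (use nrm A T commute b lam unstable in \<open>simp_all add: is_norm_zero\<close>)

end

lemma exp_dichotomy_with_estimates:
  fixes nrm :: "real^'n \<Rightarrow> real"
  assumes nrm: "is_norm nrm" and A: "continuous_on {0..} A" and dich: "exp_dichotomy_with nrm A P N lam"
  obtains T where "dichotomy_estimates nrm A T P N N lam"
proof -
  from dich obtain T where N: "N > 0" "lam > 0" and T: "is_transition_matrix A T"
    and commute: "\<forall>t\<ge>0. \<forall>s\<ge>0. P t ** T t s = T t s ** P s"
    and stable: "\<forall>t s. 0 \<le> s \<longrightarrow> s \<le> t \<longrightarrow> mat_norm nrm (T t s ** P s) \<le> N * exp (- lam * (t - s))"
    and unstable: "\<forall>t s. 0 \<le> t \<longrightarrow> t \<le> s \<longrightarrow>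
      mat_norm nrm (T t s ** (mat 1 - P s)) \<le> N * exp (- lam * (s - t))"
    unfolding exp_dichotomy_with_def by blast
  have "dichotomy_estimates nrm A T P N N lam"
  proof
    fix t s :: real and v :: "real^'n"
    show "0 \<le> s \<Longrightarrow> s \<le> t \<Longrightarrow> nrm (T t s *v (P s *v v)) \<le> N * exp (- lam * (t - s)) * nrm v"
      using mat_norm_le[OF nrm, of "T t s ** P s" _ v] stable by (simp add: matrix_vector_mul_assoc)
    show "0 \<le> t \<Longrightarrow> t \<le> s \<Longrightarrow> nrm (T t s *v ((mat 1 - P s) *v v)) \<le> N * exp (- lam * (s - t)) * nrm v"
      using mat_norm_le[OF nrm, of "T t s ** (mat 1 - P s)" _ v] unstable
      by (simp add: matrix_vector_mul_assoc)
  qed (use nrm A T commute N in auto)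
  then show ?thesis using that by blast
qed

theorem mainTheorem3:
  fixes nrm :: "real^'n \<Rightarrow> real"
    and A :: "real \<Rightarrow> real^'n^'n"
    and f :: "real \<Rightarrow> real^'n \<Rightarrow> real^'n"
    and \<rho> N lam \<delta> L :: real
  assumes "is_norm nrm"
    and "\<rho> > 0"
    and "continuous_on {0..} A"
    and "continuous_on ({0..} \<times> UNIV) (\<lambda>(t, x). f t x)"
    and "has_exp_dichotomy nrm A N lam"
    and "\<delta> > 0" and "L > 0"
    and "\<forall>t\<ge>0. \<forall>x1\<in>nball nrm 0 (\<rho> + \<delta>). \<forall>x2\<in>nball nrm 0 (\<rho> + \<delta>).
           nrm (f t x1 - f t x2) \<le> L * nrm (x1 - x2)"
  shows "(L < lam / (2 * N) \<longrightarrow>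
            cond_lipschitz_shadowing nrm (\<lambda>t x. A t *v x + f t x) (nball nrm 0 \<rho>))
       \<and> ((has_exp_contraction nrm A N lam \<or> has_exp_expansion nrm A N lam) \<longrightarrow> L < lam / N \<longrightarrow>
            cond_lipschitz_shadowing nrm (\<lambda>t x. A t *v x + f t x) (nball nrm 0 \<rho>))"
proof -
  note shadowing = dichotomy_estimates.cond_lipschitz_shadowing[OF _ assms(4,8) less_imp_le[OF \<open>L > 0\<close>]]
  obtain P where P: "exp_dichotomy_with nrm A P N lam"
    using assms(5) unfolding has_exp_dichotomy_def by blast
  then have N: "N > 0" "lam > 0" unfolding exp_dichotomy_with_def by auto
  obtain T where est: "dichotomy_estimates nrm A T P N N lam"
    using exp_dichotomy_with_estimates[OF assms(1,3) P] by blast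
  have "cond_lipschitz_shadowing nrm (\<lambda>t x. A t *v x + f t x) (nball nrm 0 \<rho>)" if "L < lam / (2 * N)"
    using shadowing[OF est] that N \<open>\<delta> > 0\<close> by (simp add: field_simps)
  moreover have "cond_lipschitz_shadowing nrm (\<lambda>t x. A t *v x + f t x) (nball nrm 0 \<rho>)"
    if "has_exp_contraction nrm A N lam \<or> has_exp_expansion nrm A N lam" "L < lam / N"
    using that(1)
  proof
    assume "has_exp_contraction nrm A N lam"
    then obtain T' where "dichotomy_estimates nrm A T' (\<lambda>_. mat 1) N N lam"
      using exp_dichotomy_with_estimates[OF assms(1,3)] unfolding has_exp_contraction_def by blast
    then have "dichotomy_estimates nrm A T' (\<lambda>_. mat 1) N 0 lam"
      by (rule dichotomy_estimates.dichotomy_estimates_contraction) simp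
    then show ?thesis using shadowing that(2) N \<open>\<delta> > 0\<close> by (simp add: field_simps)
  next
    assume "has_exp_expansion nrm A N lam"
    then obtain T' where "dichotomy_estimates nrm A T' (\<lambda>_. 0) N N lam"
      using exp_dichotomy_with_estimates[OF assms(1,3)] unfolding has_exp_expansion_def by blast
    then have "dichotomy_estimates nrm A T' (\<lambda>_. 0) 0 N lam"
      by (rule dichotomy_estimates.dichotomy_estimates_expansion) simp
    then show ?thesis using shadowing that(2) N \<open>\<delta> > 0\<close> by (simp add: field_simps)
  qed
  ultimately show ?thesis by blast
qed

end
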